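(* Let $X$ be a regular topological space and let $\mathcal A\subseteq\mathcal P(X)$. Put $\overline{\mathcal A}=\{\overline{A}:A\in\mathcal A\}$ (closures in $X$). Then $X$ is $\mathcal A$-selectively pseudocompact if and only if $X$ is $\overline{\mathcal A}$-selectively pseudocompact.
   Context: For a topological space $X$ and $\mathcal A\subseteq\mathcal P(X)$, $X$ is called $\mathcal A$-selectively pseudocompact if for every sequence $\langle U_n:n\in\omega\rangle$ of pairwise disjoint non-empty open subsets of $X$ one can choose sets $A_n\in\mathcal A$ with $A_n\subseteq U_n$ such that the family $\{A_n:n\in\omega\}$ has an accumulation point, i.e. it is not locally finite: there is a point $x\in X$ every neighbourhood of which meets $A_n$ for infinitely many $n$. *)

theory Defs
  imports "HOL-Analysis.Analysis"
begin

definition acc_point_family :: "'a topology \<Rightarrow> (nat \<Rightarrow> 'a set) \<Rightarrow> 'a \<Rightarrow> bool" where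
  "acc_point_family X A x \<longleftrightarrow> x \<in> topspace X \<and>
     (\<forall>V. openin X V \<and> x \<in> V \<longrightarrow> infinite {n. A n \<inter> V \<noteq> {}})"

definition selectively_pseudocompact :: "'a topology \<Rightarrow> 'a set set \<Rightarrow> bool" where
  "selectively_pseudocompact X \<A> \<longleftrightarrow>
     (\<forall>U :: nat \<Rightarrow> 'a set.
        (\<forall>n. openin X (U n) \<and> U n \<noteq> {}) \<and> pairwise (\<lambda>m n. disjnt (U m) (U n)) UNIV
        \<longrightarrow> (\<exists>A. (\<forall>n. A n \<in> \<A> \<and> A n \<subseteq> U n) \<and> (\<exists>x. acc_point_family X A x)))"

end

theory Submission
  imports Defs
begin

text \<open>An open set meets a set iff it meets its closure, so a family and the family of closures
  have the same accumulation points. For the forward direction, regularity lets us first shrink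
  each \<open>U n\<close> to a nonempty open \<open>V n\<close> with \<open>X closure_of V n \<subseteq> U n\<close>; sets chosen inside the
  \<open>V n\<close> then have closures inside the \<open>U n\<close>.\<close>

lemma acc_point_family_closure_of_iff:
  "acc_point_family X (\<lambda>n. X closure_of A n) x \<longleftrightarrow> acc_point_family X A x"
proof -
  have "{n. X closure_of A n \<inter> V \<noteq> {}} = {n. A n \<inter> V \<noteq> {}}" if "openin X V" for V
    using openin_Int_closure_of_eq_empty[OF that] by (simp add: Int_commute)
  then show ?thesis
    unfolding acc_point_family_def by simp
qed

lemma regular_space_shrink_openin:
  assumes "regular_space X" "openin X W" "W \<noteq> {}"
  obtains V where "openin X V" "V \<noteq> {}" "X closure_of V \<subseteq> W"
proof -
  obtain a where "a \<in> W"
    using assms(3) by blast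
  moreover have "neighbourhood_base_of (closedin X) X"
    using assms(1) by (simp add: neighbourhood_base_of_closedin)
  ultimately obtain V C where "openin X V" "a \<in> V" "closedin X C" "V \<subseteq> C" "C \<subseteq> W"
    using assms(2) unfolding neighbourhood_base_of by meson
  moreover have "X closure_of V \<subseteq> W"
    using closure_of_minimal[OF \<open>V \<subseteq> C\<close> \<open>closedin X C\<close>] \<open>C \<subseteq> W\<close> by blast
  ultimately show thesis
    by (intro that) auto
qed

lemma regular_space_shrink_disjoint_openin_seq:
  assumes "regular_space X"
    and "\<forall>n. openin X (U n) \<and> U n \<noteq> {}" "pairwise (\<lambda>m n. disjnt (U m) (U n)) UNIV"
  obtains V where "\<forall>n. openin X (V n) \<and> V n \<noteq> {}" "pairwise (\<lambda>m n. disjnt (V m) (V n)) UNIV"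
    "\<And>n. X closure_of V n \<subseteq> U n"
proof -
  have "\<exists>W. openin X W \<and> W \<noteq> {} \<and> X closure_of W \<subseteq> U n" for n
  proof -
    have "openin X (U n)" "U n \<noteq> {}"
      using assms(2) by auto
    then obtain W where "openin X W" "W \<noteq> {}" "X closure_of W \<subseteq> U n"
      by (rule regular_space_shrink_openin[OF assms(1)])
    then show ?thesis
      by blast
  qed
  then obtain V where V: "\<And>n. openin X (V n) \<and> V n \<noteq> {} \<and> X closure_of V n \<subseteq> U n"
    by metis
  have "V n \<subseteq> U n" for n
    using V[of n] closure_of_subset[OF openin_subset] by blast
  then have "pairwise (\<lambda>m n. disjnt (V m) (V n)) UNIV"
    using assms(3) unfolding pairwise_def disjnt_def by blast
  with V show ?thesis
    by (intro that) auto
qed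

lemma selectively_pseudocompact_imp_closure_of:
  assumes "regular_space X" "selectively_pseudocompact X \<A>"
  shows "selectively_pseudocompact X ((\<lambda>A. X closure_of A) ` \<A>)"
  unfolding selectively_pseudocompact_def
proof (intro allI impI, elim conjE)
  fix U :: "nat \<Rightarrow> 'a set"
  assume "\<forall>n. openin X (U n) \<and> U n \<noteq> {}" "pairwise (\<lambda>m n. disjnt (U m) (U n)) UNIV"
  then obtain V where V: "\<forall>n. openin X (V n) \<and> V n \<noteq> {}"
    "pairwise (\<lambda>m n. disjnt (V m) (V n)) UNIV" "\<And>n. X closure_of V n \<subseteq> U n"
    by (rule regular_space_shrink_disjoint_openin_seq[OF assms(1)]) blast
  obtain A x where A: "\<forall>n. A n \<in> \<A> \<and> A n \<subseteq> V n" and x: "acc_point_family X A x"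
    using assms(2)[unfolded selectively_pseudocompact_def, rule_format, OF conjI[OF V(1,2)]]
    by blast
  have "X closure_of A n \<subseteq> U n" for n
    using closure_of_mono[of "A n" "V n" X] A V(3)[of n] by blast
  moreover have "acc_point_family X (\<lambda>n. X closure_of A n) x"
    using x by (simp add: acc_point_family_closure_of_iff)
  ultimately show "\<exists>B. (\<forall>n. B n \<in> (\<lambda>A. X closure_of A) ` \<A> \<and> B n \<subseteq> U n)
                      \<and> (\<exists>x. acc_point_family X B x)"
    using A by (intro exI[of _ "\<lambda>n. X closure_of A n"]) auto
qed

lemma selectively_pseudocompact_closure_of_imp:
  assumes "\<A> \<subseteq> Pow (topspace X)" "selectively_pseudocompact X ((\<lambda>A. X closure_of A) ` \<A>)"
  shows "selectively_pseudocompact X \<A>"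
  unfolding selectively_pseudocompact_def
proof (intro allI impI, elim conjE)
  fix U :: "nat \<Rightarrow> 'a set"
  assume U: "\<forall>n. openin X (U n) \<and> U n \<noteq> {}" "pairwise (\<lambda>m n. disjnt (U m) (U n)) UNIV"
  obtain B x where B: "\<forall>n. B n \<in> (\<lambda>A. X closure_of A) ` \<A> \<and> B n \<subseteq> U n"
    and x: "acc_point_family X B x"
    using assms(2)[unfolded selectively_pseudocompact_def, rule_format, OF conjI[OF U]] by blast
  have "\<forall>n. \<exists>A \<in> \<A>. B n = X closure_of A"
    using B by blast
  then obtain A where A: "\<And>n. A n \<in> \<A> \<and> B n = X closure_of A n"
    by metis
  have "A n \<subseteq> U n" for n
    using closure_of_subset[of "A n" X] A[of n] B assms(1) by blast
  moreover have "B = (\<lambda>n. X closure_of A n)"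
    using A by (intro ext) simp
  with x have "acc_point_family X A x"
    by (simp add: acc_point_family_closure_of_iff)
  ultimately show "\<exists>A. (\<forall>n. A n \<in> \<A> \<and> A n \<subseteq> U n) \<and> (\<exists>x. acc_point_family X A x)"
    using A by (intro exI[of _ A]) auto
qed

theorem lemma1p3:
  fixes X :: "'a topology" and \<A> :: "'a set set"
  assumes "regular_space X"
    and "\<A> \<subseteq> Pow (topspace X)"
  shows "selectively_pseudocompact X \<A> \<longleftrightarrow>
         selectively_pseudocompact X ((\<lambda>A. X closure_of A) ` \<A>)"
  using selectively_pseudocompact_imp_closure_of[OF assms(1)]
    selectively_pseudocompact_closure_of_imp[OF assms(2)] by blast

end
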